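(* In every approval-based SCV instance, every committee maximizing the SW-PAV score among all committees satisfies weak-SW-JR.
   Context: An approval-based sub-committee voting (SCV) instance consists of a set of voters $N=\{1,\ldots,n\}$, a finite set of candidates $C$ partitioned into candidate subsets $C_1,\ldots,C_\ell$, positive integer quotas $k_j\le |C_j|$ with $k=\sum_{j=1}^\ell k_j$, and approval ballots $A_i\subseteq C$ for $i\in N$. A committee is a set $W\subseteq C$ with $|W\cap C_j|=k_j$ for every $j$. Let $r(0)=0$ and $r(t)=\sum_{p=1}^t 1/p$ for $t\ge1$. The SW-PAV score of $W$ is $\sum_{i\in N} r(|W\cap A_i|)$. $W$ satisfies weak-SW-JR if for every $X\subseteq N$ with $|X|\ge n/k$ and $|(\bigcap_{i\in X}A_i)\cap C_j|\ge 1$ for all $j=1,\ldots,\ell$ we have $|W\cap \bigcup_{i\in X}A_i|\ge 1$. *)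

theory Defs
  imports Complex_Main
begin

definition r :: "nat \<Rightarrow> real" where
  "r t = (\<Sum>p=1..t. 1 / real p)"

definition scv_instance ::
  "nat \<Rightarrow> 'c set \<Rightarrow> nat \<Rightarrow> (nat \<Rightarrow> 'c set) \<Rightarrow> (nat \<Rightarrow> nat) \<Rightarrow> (nat \<Rightarrow> 'c set) \<Rightarrow> bool" where
  "scv_instance n C l Cs kq A \<longleftrightarrow>
     n \<ge> 1 \<and> l \<ge> 1 \<and> finite C \<and>
     (\<forall>j\<in>{1..l}. Cs j \<noteq> {}) \<and>
     (\<forall>j\<in>{1..l}. \<forall>j'\<in>{1..l}. j \<noteq> j' \<longrightarrow> Cs j \<inter> Cs j' = {}) \<and>
     (\<Union>j\<in>{1..l}. Cs j) = C \<and>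
     (\<forall>j\<in>{1..l}. 0 < kq j \<and> kq j \<le> card (Cs j)) \<and>
     (\<forall>i\<in>{1..n}. A i \<subseteq> C)"

definition total_k :: "nat \<Rightarrow> (nat \<Rightarrow> nat) \<Rightarrow> nat" where
  "total_k l kq = (\<Sum>j=1..l. kq j)"

definition committee :: "'c set \<Rightarrow> nat \<Rightarrow> (nat \<Rightarrow> 'c set) \<Rightarrow> (nat \<Rightarrow> nat) \<Rightarrow> 'c set \<Rightarrow> bool" where
  "committee C l Cs kq W \<longleftrightarrow> W \<subseteq> C \<and> (\<forall>j\<in>{1..l}. card (W \<inter> Cs j) = kq j)"

definition sw_pav_score :: "nat \<Rightarrow> (nat \<Rightarrow> 'c set) \<Rightarrow> 'c set \<Rightarrow> real" where
  "sw_pav_score n A W = (\<Sum>i=1..n. r (card (W \<inter> A i)))"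

definition weak_sw_jr ::
  "nat \<Rightarrow> nat \<Rightarrow> (nat \<Rightarrow> 'c set) \<Rightarrow> (nat \<Rightarrow> nat) \<Rightarrow> (nat \<Rightarrow> 'c set) \<Rightarrow> 'c set \<Rightarrow> bool" where
  "weak_sw_jr n l Cs kq A W \<longleftrightarrow>
     (\<forall>X. X \<subseteq> {1..n} \<longrightarrow> real (card X) \<ge> real n / real (total_k l kq) \<longrightarrow>
        (\<forall>j\<in>{1..l}. card ((\<Inter>i\<in>X. A i) \<inter> Cs j) \<ge> 1) \<longrightarrow>
        card (W \<inter> (\<Union>i\<in>X. A i)) \<ge> 1)"

end

theory Submission
  imports Defs
begin

text \<open>Suppose a group X of at least n/k voters is left unrepresented by an optimal
  committee W although, for every subset C_j, its members commonly approve some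
  candidate of C_j. Removing c from W costs exactly the removal loss
  D(c) = sum over voters approving c of 1/|W \<inter> A_i|. These losses sum to the
  number of represented voters, which is at most n - |X| < k |X|, so some c \<in> W
  has D(c) < |X|. Replacing c by a candidate of its own subset approved by all
  of X keeps the quotas and gains at least 1 for every voter in X, a strict
  improvement of the SW-PAV score.\<close>

lemma r_0 [simp]: "r 0 = 0"
  unfolding r_def by simp

lemma r_Suc: "r (Suc t) = r t + 1 / real (Suc t)"
  unfolding r_def by simp

lemma r_mono: "a \<le> b \<Longrightarrow> r a \<le> r b"
  unfolding r_def by (rule sum_mono2) auto

lemma r_remove_le:
  assumes "finite S"
  shows "r (card S) - (if c \<in> S then 1 / real (card S) else 0) \<le> r (card (S - {c}))"
proof (cases "c \<in> S")
  case True
  then have eq: "card S = Suc (card (S - {c}))"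
    using assms by (metis card_Suc_Diff1)
  show ?thesis by (simp only: eq r_Suc True if_True)
qed simp

lemma r_card_swap_ge:
  assumes fin: "finite W" and c: "c \<in> W" and d: "d \<notin> W"
  shows "r (card (W \<inter> B)) + (if W \<inter> B = {} \<and> d \<in> B then 1 else 0)
           - (if c \<in> B then 1 / real (card (W \<inter> B)) else 0)
         \<le> r (card (insert d (W - {c}) \<inter> B))"
proof (cases "W \<inter> B = {} \<and> d \<in> B")
  case True
  then have "insert d (W - {c}) \<inter> B = {d}" and "c \<notin> B" using c by auto
  then have "card (insert d (W - {c}) \<inter> B) = Suc 0" by (simp only:) simp
  then show ?thesis using True \<open>c \<notin> B\<close> by (simp add: r_Suc)
next
  case False
  have "(W \<inter> B) - {c} \<subseteq> insert d (W - {c}) \<inter> B" by auto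
  then have "r (card (W \<inter> B - {c})) \<le> r (card (insert d (W - {c}) \<inter> B))"
    using fin by (intro r_mono card_mono) auto
  moreover have "(c \<in> W \<inter> B) = (c \<in> B)" using c by simp
  ultimately show ?thesis
    using False r_remove_le[of "W \<inter> B" c] fin by auto
qed

lemma exists_le_average:
  fixes f :: "'a \<Rightarrow> real"
  assumes "finite S" "S \<noteq> {}"
  shows "\<exists>c\<in>S. real (card S) * f c \<le> sum f S"
proof (rule ccontr)
  assume "\<not> ?thesis"
  then have "\<forall>c\<in>S. sum f S / real (card S) < f c"
    using assms by (auto simp: field_simps card_gt_0_iff)
  then have "(\<Sum>c\<in>S. sum f S / real (card S)) < sum f S"
    using sum_strict_mono[of S "\<lambda>_. sum f S / real (card S)" f] assms by auto
  then show False using assms by simp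
qed

text \<open>Removing c from W lowers the SW-PAV score by exactly this amount: every voter
  approving c loses the last harmonic term 1/|W \<inter> A_i|.\<close>

definition pav_removal_loss :: "nat \<Rightarrow> (nat \<Rightarrow> 'c set) \<Rightarrow> 'c set \<Rightarrow> 'c \<Rightarrow> real" where
  "pav_removal_loss n A W c =
     (\<Sum>i=1..n. if c \<in> A i then 1 / real (card (W \<inter> A i)) else 0)"

lemma sum_pav_removal_loss:
  assumes "finite W"
  shows "(\<Sum>c\<in>W. pav_removal_loss n A W c) = real (card {i\<in>{1..n}. W \<inter> A i \<noteq> {}})"
proof -
  have voter: "(\<Sum>c\<in>W. if c \<in> A i then 1 / real (card (W \<inter> A i)) else 0)
      = (if W \<inter> A i \<noteq> {} then 1 else 0)" for i
    using assms by (simp add: sum.inter_restrict[symmetric])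
  have "(\<Sum>c\<in>W. pav_removal_loss n A W c) = (\<Sum>i=1..n. if W \<inter> A i \<noteq> {} then 1 else 0)"
    unfolding pav_removal_loss_def by (subst sum.swap) (simp only: voter)
  also have "\<dots> = real (card {i\<in>{1..n}. W \<inter> A i \<noteq> {}})"
    by (simp add: sum.If_cases Int_def)
  finally show ?thesis .
qed

lemma exists_cheap_removal:
  assumes fin: "finite W" and k: "card W = k" "k > 0"
    and X: "X \<subseteq> {1..n}" and unrep: "\<forall>i\<in>X. W \<inter> A i = {}"
    and large: "real n \<le> real k * real (card X)" and n: "n \<ge> 1"
  shows "\<exists>c\<in>W. pav_removal_loss n A W c < real (card X)"
proof -
  have "{i\<in>{1..n}. W \<inter> A i \<noteq> {}} \<subseteq> {1..n} - X" using unrep by blast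
  then have "card {i\<in>{1..n}. W \<inter> A i \<noteq> {}} \<le> card ({1..n} - X)"
    by (rule card_mono[rotated]) simp
  also have "\<dots> = n - card X"
    using X by (simp add: card_Diff_subset finite_subset)
  finally have sum_le: "(\<Sum>c\<in>W. pav_removal_loss n A W c) \<le> real n - real (card X)"
    using fin card_mono[OF _ X] by (simp add: sum_pav_removal_loss of_nat_diff)
  have "W \<noteq> {}" using k by auto
  then obtain c where "c \<in> W"
    and c: "real k * pav_removal_loss n A W c \<le> (\<Sum>c\<in>W. pav_removal_loss n A W c)"
    using exists_le_average[OF fin] k(1) by blast
  have "card X > 0" using large n by (auto intro: Nat.gr0I)
  then have "real k * pav_removal_loss n A W c < real k * real (card X)"
    using c sum_le large by linarith
  then show ?thesis using \<open>c \<in> W\<close> \<open>k > 0\<close> by auto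
qed

lemma sw_pav_score_swap_ge:
  assumes fin: "finite W" and c: "c \<in> W" and d: "d \<notin> W"
    and X: "X \<subseteq> {1..n}" and unrep: "\<forall>i\<in>X. W \<inter> A i = {} \<and> d \<in> A i"
  shows "sw_pav_score n A W + real (card X) - pav_removal_loss n A W c
           \<le> sw_pav_score n A (insert d (W - {c}))"
proof -
  have "sw_pav_score n A W + real (card X) - pav_removal_loss n A W c
      = (\<Sum>i=1..n. r (card (W \<inter> A i)) + (if i \<in> X then 1 else 0)
           - (if c \<in> A i then 1 / real (card (W \<inter> A i)) else 0))"
    unfolding sw_pav_score_def pav_removal_loss_def using X finite_subset[OF X]
    by (simp add: sum.distrib sum_subtractf sum.If_cases Int_absorb1)
  also have "\<dots> \<le> (\<Sum>i=1..n. r (card (insert d (W - {c}) \<inter> A i)))"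
  proof (rule sum_mono)
    fix i
    have "(if i \<in> X then 1 else 0) \<le> (if W \<inter> A i = {} \<and> d \<in> A i then 1 else (0::real))"
      using unrep by auto
    then show "r (card (W \<inter> A i)) + (if i \<in> X then 1 else 0)
           - (if c \<in> A i then 1 / real (card (W \<inter> A i)) else 0)
         \<le> r (card (insert d (W - {c}) \<inter> A i))"
      using r_card_swap_ge[OF fin c d, of "A i"] by linarith
  qed
  finally show ?thesis unfolding sw_pav_score_def .
qed

lemma finite_committee:
  assumes "scv_instance n C l Cs kq A" and "committee C l Cs kq W"
  shows "finite W"
  using assms finite_subset unfolding scv_instance_def committee_def by blast

lemma card_committee:
  assumes "scv_instance n C l Cs kq A" and "committee C l Cs kq W"
  shows "card W = total_k l kq"
proof -
  have cover: "W = (\<Union>j\<in>{1..l}. W \<inter> Cs j)"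
    and disj: "\<forall>j\<in>{1..l}. \<forall>j'\<in>{1..l}. j \<noteq> j' \<longrightarrow> Cs j \<inter> Cs j' = {}"
    using assms unfolding scv_instance_def committee_def by auto
  have "card W = card (\<Union>j\<in>{1..l}. W \<inter> Cs j)"
    using cover by (rule arg_cong)
  also have "\<dots> = (\<Sum>j=1..l. card (W \<inter> Cs j))"
    using finite_committee[OF assms] disj by (intro card_UN_disjoint) auto
  also have "\<dots> = total_k l kq"
    using assms(2) unfolding committee_def total_k_def by simp
  finally show ?thesis .
qed

lemma total_k_pos:
  assumes "scv_instance n C l Cs kq A"
  shows "total_k l kq > 0"
proof -
  have "l \<ge> 1" "kq 1 > 0" using assms unfolding scv_instance_def by auto
  moreover have "kq 1 \<le> total_k l kq"
    unfolding total_k_def using \<open>l \<ge> 1\<close> by (intro member_le_sum) auto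
  ultimately show ?thesis by simp
qed

lemma committee_swap:
  assumes inst: "scv_instance n C l Cs kq A" and W: "committee C l Cs kq W"
    and j: "j \<in> {1..l}" and c: "c \<in> W \<inter> Cs j" and d: "d \<in> Cs j - W"
  shows "committee C l Cs kq (insert d (W - {c}))"
  unfolding committee_def
proof (intro conjI ballI)
  have "Cs j \<subseteq> C" using inst j unfolding scv_instance_def by blast
  then show "insert d (W - {c}) \<subseteq> C" using W d unfolding committee_def by blast
next
  fix j' assume j': "j' \<in> {1..l}"
  have quota: "card (W \<inter> Cs j') = kq j'" using W j' unfolding committee_def by simp
  have fin: "finite W" using finite_committee[OF inst W] .
  show "card (insert d (W - {c}) \<inter> Cs j') = kq j'"
  proof (cases "j' = j")
    case True
    then have "insert d (W - {c}) \<inter> Cs j' = insert d (W \<inter> Cs j - {c})" using d by auto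
    also have "card \<dots> = Suc (card (W \<inter> Cs j - {c}))" using d fin by simp
    also have "\<dots> = card (W \<inter> Cs j)" using c fin by (metis card_Suc_Diff1 finite_Int)
    finally show ?thesis using True quota by simp
  next
    case False
    then have "Cs j \<inter> Cs j' = {}" using inst j j' unfolding scv_instance_def by blast
    then have "insert d (W - {c}) \<inter> Cs j' = W \<inter> Cs j'" using c d by auto
    then show ?thesis using quota by simp
  qed
qed

theorem mainTheorem10:
  fixes n l :: nat and C :: "'c set" and Cs :: "nat \<Rightarrow> 'c set"
    and kq :: "nat \<Rightarrow> nat" and A :: "nat \<Rightarrow> 'c set" and W :: "'c set"
  assumes "scv_instance n C l Cs kq A"
    and "committee C l Cs kq W"
    and "\<forall>W'. committee C l Cs kq W' \<longrightarrow> sw_pav_score n A W' \<le> sw_pav_score n A W"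
  shows "weak_sw_jr n l Cs kq A W"
  unfolding weak_sw_jr_def
proof (intro allI impI, rule ccontr)
  fix X assume X: "X \<subseteq> {1..n}"
    and large: "real n / real (total_k l kq) \<le> real (card X)"
    and cohesive: "\<forall>j\<in>{1..l}. 1 \<le> card ((\<Inter>i\<in>X. A i) \<inter> Cs j)"
    and unrepresented: "\<not> 1 \<le> card (W \<inter> (\<Union>i\<in>X. A i))"
  have fin: "finite W" using finite_committee[OF assms(1,2)] .
  have n: "n \<ge> 1" and WC: "W \<subseteq> (\<Union>j\<in>{1..l}. Cs j)"
    using assms(1,2) unfolding scv_instance_def committee_def by auto
  have "W \<inter> (\<Union>i\<in>X. A i) = {}"
    using unrepresented fin by (metis One_nat_def Suc_leI card_gt_0_iff finite_Int)
  then have unrep: "\<forall>i\<in>X. W \<inter> A i = {}" by blast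
  have k: "total_k l kq > 0" using total_k_pos[OF assms(1)] .
  then have quota_bound: "real n \<le> real (total_k l kq) * real (card X)"
    using large by (simp add: field_simps)
  obtain c where c: "c \<in> W" and cheap: "pav_removal_loss n A W c < real (card X)"
    using exists_cheap_removal[OF fin card_committee[OF assms(1,2)] k X unrep quota_bound n] ..
  obtain j where j: "j \<in> {1..l}" "c \<in> Cs j" using c WC by blast
  have "(\<Inter>i\<in>X. A i) \<inter> Cs j \<noteq> {}"
    using cohesive j(1) by (metis card.empty not_one_le_zero)
  then obtain d where d: "\<forall>i\<in>X. d \<in> A i" "d \<in> Cs j" by blast
  have "X \<noteq> {}" using quota_bound n by auto
  then have "d \<notin> W" using d(1) unrep by blast
  have "committee C l Cs kq (insert d (W - {c}))"
    using committee_swap[OF assms(1,2) j(1)] c j(2) d(2) \<open>d \<notin> W\<close> by blast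
  then have "sw_pav_score n A (insert d (W - {c})) \<le> sw_pav_score n A W"
    using assms(3) by blast
  moreover have "sw_pav_score n A W + real (card X) - pav_removal_loss n A W c
                   \<le> sw_pav_score n A (insert d (W - {c}))"
    using unrep d(1) by (intro sw_pav_score_swap_ge[OF fin c \<open>d \<notin> W\<close> X]) blast
  ultimately show False using cheap by linarith
qed

end
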